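(* There exists an infinite class of feasible configurations with span $\sigma=1$ such that, for each configuration $G$ of this class, every dedicated leader election algorithm for $G$ takes time $\Omega(n)$, where $n$ is the size (number of nodes) of $G$.
   Context: Model. A configuration is a finite simple undirected connected graph $G$ in which each node $v$ is tagged with a non-negative integer $t_v$ (wakeup tag); smallest tag $0$, span $\sigma$ = largest tag; its size is its number of nodes $n$. Nodes are anonymous and communicate in synchronous global rounds. A node $v$ wakes up in the first global round $r\le t_v$ in which it receives a message, if any, and otherwise in global round $t_v$; its local clock is $0$ in its wakeup round, it acts from local round $1$, and nodes do not know the global clock. In each round a node transmits a message to all neighbours, listens, or terminates. A listening node receives $M$ if exactly one neighbour transmits ($M$), hears collision noise (distinct from silence and messages) if at least two neighbours transmit, and silence otherwise; a transmitting node hears nothing. A DRIP is a common function mapping a node's history (what it heard in each local round $0,\ldots,i-1$, including whether/by which message it was woken) to its action in local round $i\ge1$, with every node eventually terminating permanently; a decision function maps each node's final history to $\{0,1\}$; a dedicated leader election algorithm for $G$ is a DRIP plus decision function such that exactly one node of $G$ outputs $1$; $G$ is feasible if one exists. The time of such an algorithm is the number of rounds until the nodes terminate. *)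

theory Defs
  imports Complex_Main
begin

datatype heard =
    Spont            \<comment> \<open>local round 0: woken spontaneously (by its tag)\<close>
  | WokeBy nat       \<comment> \<open>local round 0: woken by this message\<close>
  | HSilence | HNoise | HMsg nat
  | HTransmitted     \<comment> \<open>node transmitted in this round (hears nothing)\<close>

datatype action = Transmit nat | Listen | Terminate

datatype nstate = Asleep | Active "heard list" | Done "heard list"

type_synonym drip = "heard list \<Rightarrow> action"

definition transmitting :: "drip \<Rightarrow> nstate \<Rightarrow> nat option" where
  "transmitting A s = (case s of
      Active h \<Rightarrow> (case A h of Transmit m \<Rightarrow> Some m | _ \<Rightarrow> None)
    | _ \<Rightarrow> None)"

definition hear :: "nat \<Rightarrow> (nat \<Rightarrow> nat \<Rightarrow> bool) \<Rightarrow> drip \<Rightarrow> (nat \<Rightarrow> nstate) \<Rightarrow> nat \<Rightarrow> heard" where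
  "hear n E A S v = (let T = {u. u < n \<and> E v u \<and> transmitting A (S u) \<noteq> None} in
     if card T = 0 then HSilence
     else if card T = 1 then HMsg (the (transmitting A (S (the_elem T))))
     else HNoise)"

definition step :: "nat \<Rightarrow> (nat \<Rightarrow> nat \<Rightarrow> bool) \<Rightarrow> (nat \<Rightarrow> nat) \<Rightarrow> drip \<Rightarrow> nat
    \<Rightarrow> (nat \<Rightarrow> nstate) \<Rightarrow> (nat \<Rightarrow> nstate)" where
  "step n E t A r S = (\<lambda>v. case S v of
      Asleep \<Rightarrow> (case hear n E A S v of
                   HMsg m \<Rightarrow> (if r \<le> t v then Active [WokeBy m] else Asleep)
                 | _ \<Rightarrow> (if r = t v then Active [Spont] else Asleep))
    | Active h \<Rightarrow> (case A h of
                   Terminate \<Rightarrow> Done h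
                 | Transmit m \<Rightarrow> Active (h @ [HTransmitted])
                 | Listen \<Rightarrow> Active (h @ [hear n E A S v]))
    | Done h \<Rightarrow> Done h)"

text \<open>State of all nodes before global round r (i.e. after rounds 0..r-1).\<close>
primrec pre :: "nat \<Rightarrow> (nat \<Rightarrow> nat \<Rightarrow> bool) \<Rightarrow> (nat \<Rightarrow> nat) \<Rightarrow> drip \<Rightarrow> nat \<Rightarrow> (nat \<Rightarrow> nstate)" where
  "pre n E t A 0 = (\<lambda>_. Asleep)"
| "pre n E t A (Suc r) = step n E t A r (pre n E t A r)"

definition all_done :: "nat \<Rightarrow> (nat \<Rightarrow> nat \<Rightarrow> bool) \<Rightarrow> (nat \<Rightarrow> nat) \<Rightarrow> drip \<Rightarrow> nat \<Rightarrow> bool" where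
  "all_done n E t A r = (\<forall>v<n. \<exists>h. pre n E t A r v = Done h)"

definition terminates :: "nat \<Rightarrow> (nat \<Rightarrow> nat \<Rightarrow> bool) \<Rightarrow> (nat \<Rightarrow> nat) \<Rightarrow> drip \<Rightarrow> bool" where
  "terminates n E t A = (\<exists>r. all_done n E t A r)"

definition election_time :: "nat \<Rightarrow> (nat \<Rightarrow> nat \<Rightarrow> bool) \<Rightarrow> (nat \<Rightarrow> nat) \<Rightarrow> drip \<Rightarrow> nat" where
  "election_time n E t A = (LEAST r. all_done n E t A r)"

definition final_hist :: "nat \<Rightarrow> (nat \<Rightarrow> nat \<Rightarrow> bool) \<Rightarrow> (nat \<Rightarrow> nat) \<Rightarrow> drip \<Rightarrow> nat \<Rightarrow> heard list" where
  "final_hist n E t A v = (case pre n E t A (election_time n E t A) v of Done h \<Rightarrow> h | _ \<Rightarrow> [])"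

definition is_LE :: "nat \<Rightarrow> (nat \<Rightarrow> nat \<Rightarrow> bool) \<Rightarrow> (nat \<Rightarrow> nat) \<Rightarrow> drip \<Rightarrow> (heard list \<Rightarrow> bool) \<Rightarrow> bool" where
  "is_LE n E t A d = (terminates n E t A \<and>
      card {v. v < n \<and> d (final_hist n E t A v)} = 1)"

definition feasible :: "nat \<Rightarrow> (nat \<Rightarrow> nat \<Rightarrow> bool) \<Rightarrow> (nat \<Rightarrow> nat) \<Rightarrow> bool" where
  "feasible n E t = (\<exists>A d. is_LE n E t A d)"

definition valid_config :: "nat \<Rightarrow> (nat \<Rightarrow> nat \<Rightarrow> bool) \<Rightarrow> (nat \<Rightarrow> nat) \<Rightarrow> bool" where
  "valid_config n E t = (n \<ge> 1
     \<and> (\<forall>u v. E u v \<longrightarrow> u < n \<and> v < n)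
     \<and> (\<forall>u v. E u v \<longrightarrow> E v u)
     \<and> (\<forall>v. \<not> E v v)
     \<and> (\<forall>u<n. \<forall>v<n. E\<^sup>*\<^sup>* u v)
     \<and> (\<forall>v. n \<le> v \<longrightarrow> t v = 0)
     \<and> (\<exists>v<n. t v = 0))"

definition span :: "nat \<Rightarrow> (nat \<Rightarrow> nat) \<Rightarrow> nat" where
  "span n t = Max (t ` {..<n})"

end

theory Submission
  imports Defs
begin

text \<open>The configurations are the paths with 2k+1 nodes whose two ends have tag 1 and
  whose inner nodes have tag 0. Reflecting the path is an automorphism of the configuration,
  so a node and its mirror image always have the same history and the leader must be the
  centre. But information travels one edge per round and all inner nodes look alike, so
  before round k the centre and its neighbour have the same history as well: every
  algorithm needs at least k \<ge> n/3 rounds. Feasibility: in round 1 the inner nodes wake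
  the two ends, whose transmissions start two waves travelling inwards one node per round;
  the centre is the only node where they collide, i.e. the only node that hears noise.\<close>

lemma hear_automorphism:
  assumes bij: "bij_betw \<pi> {..<n} {..<n}"
    and edges: "\<And>u w. u < n \<Longrightarrow> w < n \<Longrightarrow> E (\<pi> u) (\<pi> w) = E u w"
    and states: "\<And>u. u < n \<Longrightarrow> S' (\<pi> u) = S u"
    and "v < n"
  shows "hear n E A S' (\<pi> v) = hear n E A S v"
proof -
  define T where "T = {u. u < n \<and> E v u \<and> transmitting A (S u) \<noteq> None}"
  have image: "{u. u < n \<and> E (\<pi> v) u \<and> transmitting A (S' u) \<noteq> None} = \<pi> ` T"
  proof (intro equalityI subsetI)
    fix u assume u: "u \<in> {u. u < n \<and> E (\<pi> v) u \<and> transmitting A (S' u) \<noteq> None}"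
    then obtain u' where u': "u' < n" "u = \<pi> u'"
      using bij_betw_imp_surj_on[OF bij] by (auto simp: image_iff)
    then have "u' \<in> T"
      using u edges[OF \<open>v < n\<close> \<open>u' < n\<close>] states[OF \<open>u' < n\<close>] unfolding T_def by simp
    then show "u \<in> \<pi> ` T"
      using u' by blast
  next
    fix u assume "u \<in> \<pi> ` T"
    then obtain u' where u': "u' \<in> T" "u = \<pi> u'"
      by blast
    then have "u' < n"
      unfolding T_def by simp
    then show "u \<in> {u. u < n \<and> E (\<pi> v) u \<and> transmitting A (S' u) \<noteq> None}"
      using u' bij_betwE[OF bij] edges[OF \<open>v < n\<close> \<open>u' < n\<close>] states[OF \<open>u' < n\<close>]
      unfolding T_def by simp
  qed
  have card: "card (\<pi> ` T) = card T"
    by (rule card_image, rule inj_on_subset[OF bij_betw_imp_inj_on[OF bij]]) (auto simp: T_def)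
  show ?thesis
  proof (cases "card T = 1")
    case True
    then obtain x where x: "T = {x}"
      by (rule card_1_singletonE)
    then have "S' (\<pi> x) = S x"
      using states unfolding T_def by blast
    then show ?thesis
      unfolding hear_def Let_def image T_def[symmetric] using x by simp
  next
    case False
    then show ?thesis
      unfolding hear_def Let_def image T_def[symmetric] using card by simp
  qed
qed

lemma hear_cong:
  assumes "\<And>u. u < n \<Longrightarrow> S' u = S u" and "v < n"
  shows "hear n E A S' v = hear n E A S v"
proof -
  have "hear n E A S' (id v) = hear n E A S v"
    by (rule hear_automorphism) (auto simp: assms bij_betw_def)
  then show ?thesis
    by simp
qed

lemma step_eqI:
  assumes "S' v' = S v" and "t v' = t v" and "hear n E A S' v' = hear n E A S v"
  shows "step n E t A r S' v' = step n E t A r S v"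
  using assms unfolding step_def by (simp only:)

lemma pre_automorphism:
  assumes bij: "bij_betw \<pi> {..<n} {..<n}"
    and edges: "\<And>u w. u < n \<Longrightarrow> w < n \<Longrightarrow> E (\<pi> u) (\<pi> w) = E u w"
    and tags: "\<And>u. u < n \<Longrightarrow> t (\<pi> u) = t u"
    and "v < n"
  shows "pre n E t A r (\<pi> v) = pre n E t A r v"
  using \<open>v < n\<close>
proof (induction r arbitrary: v)
  case 0
  then show ?case by simp
next
  case (Suc r)
  have "hear n E A (pre n E t A r) (\<pi> v) = hear n E A (pre n E t A r) v"
    by (rule hear_automorphism[OF bij]) (use edges Suc in auto)
  then show ?case
    unfolding pre.simps by (rule step_eqI[rotated 2]) (use Suc tags in auto)
qed

lemma is_LE_leader_unique:
  assumes "is_LE n E t A d" "u < n" "v < n"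
    and "d (final_hist n E t A u)" "d (final_hist n E t A v)"
  shows "u = v"
proof -
  have "card {w. w < n \<and> d (final_hist n E t A w)} = 1"
    using assms(1) unfolding is_LE_def by blast
  then obtain x where "{w. w < n \<and> d (final_hist n E t A w)} = {x}"
    by (rule card_1_singletonE)
  then show ?thesis
    using assms(2-) by (metis (no_types, lifting) mem_Collect_eq singletonD)
qed

definition path_edge :: "nat \<Rightarrow> nat \<Rightarrow> nat \<Rightarrow> bool" where
  "path_edge n u v \<longleftrightarrow> u < n \<and> v < n \<and> (u = Suc v \<or> v = Suc u)"

definition end_tags :: "nat \<Rightarrow> nat \<Rightarrow> nat" where
  "end_tags n v = (if v = 0 \<or> Suc v = n then 1 else 0)"

fun reception :: "nat option \<Rightarrow> nat option \<Rightarrow> heard" where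
  "reception None None = HSilence"
| "reception (Some m) None = HMsg m"
| "reception None (Some m) = HMsg m"
| "reception (Some _) (Some _) = HNoise"

lemma hear_path_edge:
  assumes "j < n"
  shows "hear n (path_edge n) A S j =
    reception (if 0 < j then transmitting A (S (j - 1)) else None)
              (if Suc j < n then transmitting A (S (Suc j)) else None)"
proof -
  define left where "left \<longleftrightarrow> 0 < j \<and> transmitting A (S (j - 1)) \<noteq> None"
  define right where "right \<longleftrightarrow> Suc j < n \<and> transmitting A (S (Suc j)) \<noteq> None"
  have T: "{u. u < n \<and> path_edge n j u \<and> transmitting A (S u) \<noteq> None}
      = (if left then {j - 1} else {}) \<union> (if right then {Suc j} else {})"
    using assms unfolding left_def right_def path_edge_def by (auto split: if_splits)
  have "j - 1 \<noteq> Suc j"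
    by simp
  then show ?thesis
    unfolding hear_def Let_def T using left_def right_def
    by (cases left; cases right) (auto simp: card_insert_if)
qed

lemma path_edge_connected:
  assumes "u < n" "v < n"
  shows "(path_edge n)\<^sup>*\<^sup>* u v"
proof -
  have from_0: "(path_edge n)\<^sup>*\<^sup>* 0 w" if "w < n" for w
    using that
  proof (induction w)
    case (Suc w)
    then show ?case
      by (auto simp: path_edge_def intro: rtranclp.rtrancl_into_rtrancl)
  qed simp
  have "symp (path_edge n)"
    by (auto simp: path_edge_def intro: sympI)
  then have "(path_edge n)\<^sup>*\<^sup>* u 0"
    using from_0[OF \<open>u < n\<close>] by (blast dest: sympD[OF symp_rtranclp])
  then show ?thesis
    using from_0[OF \<open>v < n\<close>] by (rule rtranclp_trans)
qed

lemma valid_config_path: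
  assumes "3 \<le> n"
  shows "valid_config n (path_edge n) (end_tags n)"
proof -
  have "end_tags n 1 = 0"
    using assms by (simp add: end_tags_def)
  then show ?thesis
    using assms path_edge_connected unfolding valid_config_def
    by (auto simp: path_edge_def end_tags_def intro!: exI[of _ 1])
qed

lemma span_end_tags:
  assumes "3 \<le> n"
  shows "span n (end_tags n) = 1"
proof -
  have "end_tags n 0 = 1" "end_tags n 1 = 0"
    using assms by (simp_all add: end_tags_def)
  then have "{0, 1} \<subseteq> end_tags n ` {..<n}"
    using assms by (auto intro: image_eqI[where x = 0] image_eqI[where x = 1])
  then have "end_tags n ` {..<n} = {0, 1}"
    by (auto simp: end_tags_def)
  then show ?thesis
    unfolding span_def by simp
qed

lemma pre_path_mirror:
  assumes tags: "\<And>v. v < n \<Longrightarrow> t (n - 1 - v) = t v" and "v < n"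
  shows "pre n (path_edge n) t A r (n - 1 - v) = pre n (path_edge n) t A r v"
proof (rule pre_automorphism[where \<pi> = "\<lambda>v. n - 1 - v"])
  show "bij_betw (\<lambda>v. n - 1 - v) {..<n} {..<n}"
    by (rule bij_betw_byWitness[where f' = "\<lambda>v. n - 1 - v"]) auto
  show "path_edge n (n - 1 - u) (n - 1 - w) = path_edge n u w" if "u < n" "w < n" for u w
    using that unfolding path_edge_def by auto
qed (use assms in auto)

text \<open>Information travels one edge per round and all inner nodes have the same tag.\<close>
lemma pre_path_interior_eq:
  assumes tags: "\<And>u v. 0 < u \<Longrightarrow> Suc u < n \<Longrightarrow> 0 < v \<Longrightarrow> Suc v < n \<Longrightarrow> t u = t v"
    and "r \<le> i" "i + r < n" "r \<le> j" "j + r < n"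
  shows "pre n (path_edge n) t A r i = pre n (path_edge n) t A r j"
  using assms(2-)
proof (induction r arbitrary: i j)
  case 0
  then show ?case by simp
next
  case (Suc r)
  let ?S = "pre n (path_edge n) t A r"
  have "?S (i - 1) = ?S (j - 1)" "?S i = ?S j" "?S (Suc i) = ?S (Suc j)"
    using Suc.prems by (auto intro!: Suc.IH)
  moreover have "t i = t j"
    using Suc.prems by (intro tags) auto
  ultimately show ?case
    unfolding pre.simps using Suc.prems by (intro step_eqI) (simp_all add: hear_path_edge)
qed

lemma election_time_path_ge:
  assumes n: "n = Suc (2 * k)" and LE: "is_LE n (path_edge n) (end_tags n) A d"
  shows "k \<le> election_time n (path_edge n) (end_tags n) A"
proof (rule ccontr)
  let ?T = "election_time n (path_edge n) (end_tags n) A"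
  let ?h = "final_hist n (path_edge n) (end_tags n) A"
  assume "\<not> k \<le> ?T"
  have "end_tags n (n - 1 - v) = end_tags n v" if "v < n" for v
    using that by (auto simp: end_tags_def)
  then have mirror: "?h (2 * k - v) = ?h v" if "v < n" for v
    using pre_path_mirror[of n "end_tags n", OF _ that] n unfolding final_hist_def by simp
  have centre: "?h (Suc k) = ?h k"
    using pre_path_interior_eq[of n "end_tags n" ?T "Suc k" k] n \<open>\<not> k \<le> ?T\<close>
    unfolding final_hist_def by (simp add: end_tags_def)
  obtain x where x: "x < n" "d (?h x)"
    using LE unfolding is_LE_def by (metis (mono_tags, lifting) card_1_singletonE mem_Collect_eq singletonI)
  have "2 * k - x = x"
    using is_LE_leader_unique[OF LE] x mirror n by simp
  then have "x = k"
    by simp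
  then have "Suc k = k"
    using is_LE_leader_unique[OF LE, of "Suc k" k] x centre n \<open>\<not> k \<le> ?T\<close> by simp
  then show False
    by simp
qed

text \<open>The run in which node v wakes up in round t v and then appends the entries of H v
  to its history one per round, terminating once H v is complete; consistent_run says
  that this is the actual run of A.\<close>
definition run_state :: "(nat \<Rightarrow> nat) \<Rightarrow> (nat \<Rightarrow> heard list) \<Rightarrow> nat \<Rightarrow> nat \<Rightarrow> nstate" where
  "run_state t H r v =
    (if r \<le> t v then Asleep
     else if r - t v \<le> length (H v) then Active (take (r - t v) (H v))
     else Done (H v))"

definition consistent_run ::
    "nat \<Rightarrow> (nat \<Rightarrow> nat \<Rightarrow> bool) \<Rightarrow> (nat \<Rightarrow> nat) \<Rightarrow> drip \<Rightarrow> (nat \<Rightarrow> heard list) \<Rightarrow> bool" where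
  "consistent_run n E t A H \<longleftrightarrow> (\<forall>v<n.
      (\<forall>r < t v. hear n E A (run_state t H r) v \<notin> range HMsg)
    \<and> H v \<noteq> []
    \<and> hd (H v) = (case hear n E A (run_state t H (t v)) v of HMsg m \<Rightarrow> WokeBy m | _ \<Rightarrow> Spont)
    \<and> (\<forall>i. 0 < i \<and> i < length (H v) \<longrightarrow> A (take i (H v)) \<noteq> Terminate
          \<and> H v ! i = (if A (take i (H v)) = Listen
                       then hear n E A (run_state t H (t v + i)) v else HTransmitted))
    \<and> A (H v) = Terminate)"

lemma step_run_state:
  assumes run: "consistent_run n E t A H" and "v < n"
  shows "step n E t A r (run_state t H r) v = run_state t H (Suc r) v"
proof -
  have quiet: "\<forall>r < t v. hear n E A (run_state t H r) v \<notin> range HMsg"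
    and nonempty: "H v \<noteq> []"
    and wake: "hd (H v) = (case hear n E A (run_state t H (t v)) v of HMsg m \<Rightarrow> WokeBy m | _ \<Rightarrow> Spont)"
    and entries: "\<And>i. 0 < i \<Longrightarrow> i < length (H v) \<Longrightarrow> A (take i (H v)) \<noteq> Terminate
          \<and> H v ! i = (if A (take i (H v)) = Listen
                       then hear n E A (run_state t H (t v + i)) v else HTransmitted)"
    and stop: "A (H v) = Terminate"
    using run \<open>v < n\<close> unfolding consistent_run_def by blast+
  consider "r < t v" | "r = t v" | "t v < r" "r - t v < length (H v)"
    | "t v < r" "r - t v = length (H v)" | "t v < r" "length (H v) < r - t v"
    by linarith
  then show ?thesis
  proof cases
    case 1
    then show ?thesis
      using quiet by (auto simp: step_def run_state_def split: heard.split)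
  next
    case 2
    have "take 1 (H v) = [hd (H v)]" "1 \<le> length (H v)"
      using nonempty by (cases "H v"; simp)+
    then show ?thesis
      using 2 wake by (auto simp: step_def run_state_def split: heard.split)
  next
    case 3
    define i where "i = r - t v"
    have "0 < i" "i < length (H v)" and r: "t v + i = r"
      using 3 by (auto simp: i_def)
    have before: "run_state t H r v = Active (take i (H v))"
      using 3 by (simp add: run_state_def i_def)
    have "run_state t H (Suc r) v = Active (take (Suc i) (H v))"
      using 3 by (simp add: run_state_def i_def Suc_diff_le)
    also have "take (Suc i) (H v) = take i (H v) @ [H v ! i]"
      using \<open>i < length (H v)\<close> by (rule take_Suc_conv_app_nth)
    finally have after: "run_state t H (Suc r) v = Active (take i (H v) @ [H v ! i])" .
    show ?thesis
      using entries[OF \<open>0 < i\<close> \<open>i < length (H v)\<close>, unfolded r]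
      unfolding step_def before after
      by (cases "A (take i (H v))") simp_all
  next
    case 4
    then show ?thesis
      using stop by (simp add: step_def run_state_def)
  next
    case 5
    then show ?thesis
      by (simp add: step_def run_state_def)
  qed
qed

lemma pre_eq_run_state:
  assumes "consistent_run n E t A H" and "v < n"
  shows "pre n E t A r v = run_state t H r v"
  using \<open>v < n\<close>
proof (induction r arbitrary: v)
  case 0
  then show ?case
    by (simp add: run_state_def)
next
  case (Suc r)
  have "step n E t A r (pre n E t A r) v = step n E t A r (run_state t H r) v"
    using Suc by (intro step_eqI hear_cong) simp_all
  then show ?case
    using step_run_state[OF assms(1) Suc.prems] by simp
qed

lemma all_done_run_state:
  assumes "consistent_run n E t A H" and "\<And>v. v < n \<Longrightarrow> t v + length (H v) < r"
  shows "all_done n E t A r"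
proof -
  have "run_state t H r v = Done (H v)" if "v < n" for v
    using assms(2)[OF that] by (simp add: run_state_def)
  then show ?thesis
    using pre_eq_run_state[OF assms(1)] unfolding all_done_def by simp
qed

lemma final_hist_run_state:
  assumes run: "consistent_run n E t A H" and "terminates n E t A" and "v < n"
  shows "final_hist n E t A v = H v"
proof -
  let ?T = "election_time n E t A"
  have "all_done n E t A ?T"
    using \<open>terminates n E t A\<close> unfolding terminates_def election_time_def by (rule LeastI_ex)
  then obtain h where "pre n E t A ?T v = Done h"
    using \<open>v < n\<close> unfolding all_done_def by blast
  moreover have "h = H v" if "run_state t H ?T v = Done h"
    using that by (simp add: run_state_def split: if_splits)
  ultimately show ?thesis
    using pre_eq_run_state[OF run \<open>v < n\<close>] unfolding final_hist_def by simp
qed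

definition end_dist :: "nat \<Rightarrow> nat \<Rightarrow> nat" where
  "end_dist k v = min v (2 * k - v)"

definition wave_hist :: "nat \<Rightarrow> nat \<Rightarrow> heard list" where
  "wave_hist k d =
    (if d = 0 then [WokeBy 0, HTransmitted]
     else Spont # HTransmitted # replicate (d - 1) HSilence
       @ (if d = k then [HNoise] else [HMsg 0, HTransmitted]))"

definition wave_alg :: drip where
  "wave_alg h =
    (case last h of
      HSilence \<Rightarrow> Listen
    | HNoise \<Rightarrow> Terminate
    | HTransmitted \<Rightarrow> if h = [Spont, HTransmitted] then Listen else Terminate
    | _ \<Rightarrow> Transmit 0)"

lemma length_wave_hist:
  "length (wave_hist k d) = (if d = 0 then 2 else if d = k then d + 2 else d + 3)"
  by (simp add: wave_hist_def)

lemma nth_wave_hist: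
  assumes "0 < d" "i < length (wave_hist k d)"
  shows "wave_hist k d ! i =
    (if i = 0 then Spont else if i = 1 then HTransmitted else if i \<le> d then HSilence
     else if i = d + 1 then (if d = k then HNoise else HMsg 0) else HTransmitted)"
  using assms by (auto simp: wave_hist_def nth_append nth_Cons' length_wave_hist)

lemma wave_alg_wave_hist:
  assumes "0 < i" "i < length (wave_hist k d)"
  shows "wave_alg (take i (wave_hist k d)) =
    (if wave_hist k d ! i = HTransmitted then Transmit 0 else Listen)"
proof (cases "d = 0")
  case True
  then have "i = 1"
    using assms by (simp add: length_wave_hist)
  then show ?thesis
    using True by (simp add: wave_hist_def wave_alg_def)
next
  case False
  let ?H = "wave_hist k d"
  obtain j where i: "i = Suc j"
    using \<open>0 < i\<close> gr0_implies_Suc by blast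
  have last: "last (take i ?H) = ?H ! j"
    using assms unfolding i by (simp add: take_Suc_conv_app_nth)
  consider "j = 0" | "j = 1" | "2 \<le> j" "j \<le> d" | "j = d + 1" "d \<noteq> k"
    using assms False unfolding i by (fastforce simp: length_wave_hist split: if_splits)
  then show ?thesis
  proof cases
    case 1
    then show ?thesis
      using False assms unfolding i by (simp add: wave_hist_def wave_alg_def)
  next
    case 2
    then show ?thesis
      using False assms unfolding i
      by (simp add: wave_hist_def wave_alg_def numeral_2_eq_2 nth_Cons' nth_append)
  next
    case 3
    then show ?thesis
      using False assms last unfolding i wave_alg_def by (simp add: nth_wave_hist)
  next
    case 4
    then show ?thesis
      using False assms last unfolding i wave_alg_def by (simp add: nth_wave_hist)
  qed
qed

lemma wave_alg_wave_hist_complete: "wave_alg (wave_hist k d) = Terminate"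
  by (simp add: wave_hist_def wave_alg_def)

abbreviation wave_run :: "nat \<Rightarrow> nat \<Rightarrow> nat \<Rightarrow> nstate" where
  "wave_run k \<equiv> run_state (end_tags (Suc (2 * k))) (\<lambda>v. wave_hist k (end_dist k v))"

definition wave_transmits :: "nat \<Rightarrow> nat \<Rightarrow> nat \<Rightarrow> bool" where
  "wave_transmits k r d \<longleftrightarrow> (r = 1 \<and> 0 < d) \<or> (r = d + 2 \<and> d < k)"

lemma end_dist_le: "end_dist k v \<le> k"
  by (simp add: end_dist_def)

lemma end_tags_end_dist:
  "v < Suc (2 * k) \<Longrightarrow> end_tags (Suc (2 * k)) v = (if end_dist k v = 0 then 1 else 0)"
  by (auto simp: end_tags_def end_dist_def)

lemma transmitting_wave_run:
  assumes "0 < k" "v < Suc (2 * k)"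
  shows "transmitting wave_alg (wave_run k r v) =
    (if wave_transmits k r (end_dist k v) then Some 0 else None)"
proof -
  define d where "d = end_dist k v"
  define H where "H = wave_hist k d"
  have tag: "end_tags (Suc (2 * k)) v = (if d = 0 then 1 else 0)"
    using assms(2) unfolding d_def by (rule end_tags_end_dist)
  have "d \<le> k"
    unfolding d_def by (rule end_dist_le)
  define i where "i = r - end_tags (Suc (2 * k)) v"
  have "transmitting wave_alg (wave_run k r v) =
    (if end_tags (Suc (2 * k)) v < r \<and> i < length H \<and> H ! i = HTransmitted then Some 0 else None)"
    using wave_alg_wave_hist[of i k d] wave_alg_wave_hist_complete[of k d]
    unfolding H_def i_def d_def
    by (cases "r - end_tags (Suc (2 * k)) v = length (wave_hist k (end_dist k v))")
      (auto simp: run_state_def transmitting_def)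
  also have "\<dots> = (if wave_transmits k r d then Some 0 else None)"
  proof (cases "d = 0")
    case True
    then show ?thesis
      using \<open>0 < k\<close> unfolding tag i_def H_def
      by (auto simp: wave_transmits_def wave_hist_def nth_Cons')
  next
    case False
    then show ?thesis
      using \<open>d \<le> k\<close> unfolding tag i_def H_def
      by (auto simp: wave_transmits_def nth_wave_hist length_wave_hist split: if_splits)
  qed
  finally show ?thesis
    unfolding d_def .
qed

lemma reception_if_Some:
  "reception (if a then Some m else None) (if b then Some m else None) =
    (if a \<and> b then HNoise else if a \<or> b then HMsg m else HSilence)"
  by (cases a; cases b) simp_all

lemma hear_wave_run:
  assumes "0 < k" "v < Suc (2 * k)"
  shows "hear (Suc (2 * k)) (path_edge (Suc (2 * k))) wave_alg (wave_run k r) v =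
    (let left = 0 < v \<and> wave_transmits k r (end_dist k (v - 1));
         right = v < 2 * k \<and> wave_transmits k r (end_dist k (Suc v))
     in if left \<and> right then HNoise else if left \<or> right then HMsg 0 else HSilence)"
  using assms by (simp add: hear_path_edge transmitting_wave_run reception_if_Some)

lemma hear_wave_run_start:
  assumes "0 < k" "v < Suc (2 * k)"
  shows "hear (Suc (2 * k)) (path_edge (Suc (2 * k))) wave_alg (wave_run k 0) v = HSilence"
  unfolding hear_wave_run[OF assms] by (simp add: wave_transmits_def)

lemma hear_wave_run_wakeup:
  assumes "0 < k" "v < Suc (2 * k)" "end_dist k v = 0"
  shows "hear (Suc (2 * k)) (path_edge (Suc (2 * k))) wave_alg (wave_run k 1) v = HMsg 0"
proof -
  have "v = 0 \<or> v = 2 * k"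
    using assms(2,3) by (auto simp: end_dist_def)
  moreover have "end_dist k 1 = 1" "end_dist k (2 * k - 1) = 1"
    using assms(1) by (simp_all add: end_dist_def)
  ultimately show ?thesis
    unfolding hear_wave_run[OF assms(1,2)] Let_def
    using assms(1) by (auto simp: wave_transmits_def)
qed

lemma hear_wave_run_inner:
  assumes "0 < k" "v < Suc (2 * k)" "2 \<le> r" "r \<le> end_dist k v + 1"
  shows "hear (Suc (2 * k)) (path_edge (Suc (2 * k))) wave_alg (wave_run k r) v =
    (if r \<le> end_dist k v then HSilence else if end_dist k v = k then HNoise else HMsg 0)"
proof -
  have late: "wave_transmits k r d \<longleftrightarrow> r = d + 2 \<and> d < k" for d
    using assms(3) by (auto simp: wave_transmits_def)
  consider "0 < v" "v < k" | "v = k" | "k < v" "v < 2 * k"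
    using assms by (fastforce simp: end_dist_def)
  then show ?thesis
  proof cases
    case 1
    then have "end_dist k v = v" "end_dist k (v - 1) = v - 1" "end_dist k (Suc v) = Suc v"
      by (simp_all add: end_dist_def)
    then show ?thesis
      unfolding hear_wave_run[OF assms(1,2)] Let_def late using 1 assms(3,4) by auto
  next
    case 2
    then have "end_dist k v = k" "end_dist k (v - 1) = k - 1" "end_dist k (Suc v) = k - 1"
      by (simp_all add: end_dist_def)
    then show ?thesis
      unfolding hear_wave_run[OF assms(1,2)] Let_def late using 2 assms by auto
  next
    case 3
    then have "end_dist k v = 2 * k - v" "end_dist k (v - 1) = Suc (2 * k - v)"
        "end_dist k (Suc v) = 2 * k - v - 1"
      by (simp_all add: end_dist_def)
    then show ?thesis
      unfolding hear_wave_run[OF assms(1,2)] Let_def late using 3 assms(3,4) by auto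
  qed
qed

lemma consistent_run_wave:
  assumes "0 < k"
  shows "consistent_run (Suc (2 * k)) (path_edge (Suc (2 * k))) (end_tags (Suc (2 * k))) wave_alg
    (\<lambda>v. wave_hist k (end_dist k v))"
  unfolding consistent_run_def
proof (intro allI impI conjI)
  fix v assume v: "v < Suc (2 * k)"
  define d where "d = end_dist k v"
  let ?H = "wave_hist k d" and ?hear = "hear (Suc (2 * k)) (path_edge (Suc (2 * k))) wave_alg"
  have tag: "end_tags (Suc (2 * k)) v = (if d = 0 then 1 else 0)"
    using v unfolding d_def by (rule end_tags_end_dist)
  show "?hear (wave_run k r) v \<notin> range HMsg" if "r < end_tags (Suc (2 * k)) v" for r
  proof -
    have "r = 0"
      using that by (simp add: tag split: if_splits)
    then show ?thesis
      using hear_wave_run_start[OF assms v] by auto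
  qed
  show "?H \<noteq> []"
    by (simp add: wave_hist_def)
  show "hd ?H = (case ?hear (wave_run k (end_tags (Suc (2 * k)) v)) v of
      HMsg m \<Rightarrow> WokeBy m | _ \<Rightarrow> Spont)"
    using hear_wave_run_start[OF assms v] hear_wave_run_wakeup[OF assms v]
    by (simp add: tag d_def wave_hist_def)
  show "wave_alg ?H = Terminate"
    by (rule wave_alg_wave_hist_complete)
  fix i assume "0 < i \<and> i < length ?H"
  then have i: "0 < i" "i < length ?H"
    by simp_all
  then show "wave_alg (take i ?H) \<noteq> Terminate"
    by (simp add: wave_alg_wave_hist)
  show "?H ! i = (if wave_alg (take i ?H) = Listen
      then ?hear (wave_run k (end_tags (Suc (2 * k)) v + i)) v else HTransmitted)"
  proof (cases "?H ! i = HTransmitted")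
    case False
    have "0 < d"
      using False i by (cases "d = 0") (auto simp: wave_hist_def nth_Cons')
    then have "2 \<le> i" "i \<le> d + 1"
      using False i by (auto simp: nth_wave_hist length_wave_hist split: if_splits)
    then show ?thesis
      using False i hear_wave_run_inner[OF assms v, of i] end_dist_le[of k v]
      by (simp add: wave_alg_wave_hist tag nth_wave_hist d_def)
  qed (use i in \<open>simp add: wave_alg_wave_hist\<close>)
qed

lemma is_LE_wave:
  assumes "0 < k"
  shows "is_LE (Suc (2 * k)) (path_edge (Suc (2 * k))) (end_tags (Suc (2 * k))) wave_alg
    (\<lambda>h. HNoise \<in> set h)"
proof -
  let ?n = "Suc (2 * k)"
  note run = consistent_run_wave[OF assms]
  have "all_done ?n (path_edge ?n) (end_tags ?n) wave_alg (k + 3)"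
  proof (rule all_done_run_state[OF run])
    fix v assume "v < ?n"
    then show "end_tags ?n v + length (wave_hist k (end_dist k v)) < k + 3"
      using assms end_dist_le[of k v] by (simp add: end_tags_end_dist length_wave_hist)
  qed
  then have halts: "terminates ?n (path_edge ?n) (end_tags ?n) wave_alg"
    unfolding terminates_def by blast
  have "HNoise \<in> set (wave_hist k (end_dist k v)) \<longleftrightarrow> v = k" if "v < ?n" for v
    using that assms by (auto simp: wave_hist_def end_dist_def)
  then have "{v. v < ?n \<and> HNoise \<in> set (final_hist ?n (path_edge ?n) (end_tags ?n) wave_alg v)} = {k}"
    using final_hist_run_state[OF run halts] by auto
  then show ?thesis
    using halts unfolding is_LE_def by simp
qed

theorem proposition2:
  shows "\<exists>C :: (nat \<times> (nat \<Rightarrow> nat \<Rightarrow> bool) \<times> (nat \<Rightarrow> nat)) set.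
    infinite C
    \<and> (\<forall>(n, E, t) \<in> C. valid_config n E t \<and> span n t = 1 \<and> feasible n E t)
    \<and> (\<exists>c :: real. c > 0 \<and>
         (\<forall>(n, E, t) \<in> C. \<forall>A d. is_LE n E t A d \<longrightarrow>
             c * real n \<le> real (election_time n E t A)))"
proof -
  define config where "config k = (Suc (2 * k), path_edge (Suc (2 * k)), end_tags (Suc (2 * k)))"
    for k :: nat
  have feasible: "feasible (Suc (2 * k)) (path_edge (Suc (2 * k))) (end_tags (Suc (2 * k)))"
    if "0 < k" for k
    using is_LE_wave[OF that] unfolding feasible_def by blast
  have "inj_on config {1..}"
    by (rule inj_onI) (simp add: config_def)
  then have "infinite (config ` {1..})"
    using finite_imageD infinite_Ici by blast
  moreover have "\<forall>(n, E, t) \<in> config ` {1..}. valid_config n E t \<and> span n t = 1 \<and> feasible n E t"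
    using valid_config_path span_end_tags feasible by (auto simp: config_def Suc_le_eq)
  moreover have "\<forall>(n, E, t) \<in> config ` {1..}. \<forall>A d. is_LE n E t A d \<longrightarrow>
      1 / 3 * real n \<le> real (election_time n E t A)"
    using election_time_path_ge by (fastforce simp: config_def)
  ultimately show ?thesis
    by (intro exI[of _ "config ` {1..}"] conjI exI[of _ "1 / 3 :: real"]) auto
qed

end
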